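(* Let $s>1/2$ and $0\le\varepsilon<1$, and fix a constant $c_0>0$. For a real-valued mean-zero function $\phi$ on $\mathbb{T}$ (possibly depending on $t$) define the multilinear expressions \[ \widehat{B_1}(\phi)(n)=\sum_{\substack{n=n_1+n_2\\ n_1,n_2\neq n}}\frac{n(n_1^2+n_2^2)}{\Phi_2(n_1,n_2)}\widehat\phi(n_1)\widehat\phi(n_2), \] \[ \widehat{B_2}(\phi)(n)=\sum_{\substack{n=n_1+n_2+n_3\\ |\Phi_3(n_1,n_2,n_3)|\ge c_0\max_i|n_i|^4\\ n_1,n_2,n_3\neq n}}\frac{n(n_1^2+(n_2+n_3)^2)(n_2+n_3)(n_2^2+n_3^2)}{\Phi_2(n_1,n_2+n_3)\,\Phi_3(n_1,n_2,n_3)}\widehat\phi(n_1)\widehat\phi(n_2)\widehat\phi(n_3), \] where all frequencies $n,n_j$ range over $\mathbb{Z}\setminus\{0\}$ (and terms with $n_2+n_3=0$ in $B_2$ are omitted). Then for every such $\tilde u$, \[ \|B_1(\tilde u)+B_2(\tilde u)\|_{C^0_tH^{s+\varepsilon}_x}\lesssim\|\tilde u\|_{C^0_tH^s_x}^2+\|\tilde u\|_{C^0_tH^s_x}^3. \]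
   Context: $\Phi_2(n_1,n_2)=(n_1+n_2)^5-n_1^5-n_2^5$ and $\Phi_3(n_1,n_2,n_3)=(n_1+n_2+n_3)^5-n_1^5-n_2^5-n_3^5$. Factors of $2\pi$ are ignored. The implicit constant may depend on $s,\varepsilon,c_0$. *)

theory Defs
  imports "HOL-Analysis.Analysis"
begin

text \<open>Functions on the torus are represented by their Fourier coefficients
  a :: int \<Rightarrow> complex. Factors of 2 pi are ignored.\<close>

definition Phi2 :: "int \<Rightarrow> int \<Rightarrow> int" where
  "Phi2 n1 n2 = (n1 + n2)^5 - n1^5 - n2^5"

definition Phi3 :: "int \<Rightarrow> int \<Rightarrow> int \<Rightarrow> int" where
  "Phi3 n1 n2 n3 = (n1 + n2 + n3)^5 - n1^5 - n2^5 - n3^5"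

definition real_mean_zero :: "(int \<Rightarrow> complex) \<Rightarrow> bool" where
  "real_mean_zero a \<longleftrightarrow> a 0 = 0 \<and> (\<forall>n. a (-n) = cnj (a n))"

definition in_Hs :: "real \<Rightarrow> (int \<Rightarrow> complex) \<Rightarrow> bool" where
  "in_Hs s a \<longleftrightarrow> (\<lambda>n. (1 + (real_of_int n)^2) powr s * (cmod (a n))^2) summable_on UNIV"

definition Hs_norm :: "real \<Rightarrow> (int \<Rightarrow> complex) \<Rightarrow> real" where
  "Hs_norm s a = sqrt (\<Sum>\<^sub>\<infinity>n. (1 + (real_of_int n)^2) powr s * (cmod (a n))^2)"

definition B1_index :: "int \<Rightarrow> int set" where
  "B1_index n = {n1. n1 \<noteq> 0 \<and> n - n1 \<noteq> 0 \<and> n1 \<noteq> n \<and> n - n1 \<noteq> n}"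

definition B1_term :: "(int \<Rightarrow> complex) \<Rightarrow> int \<Rightarrow> int \<Rightarrow> complex" where
  "B1_term a n n1 = (let n2 = n - n1 in
     complex_of_real (real_of_int (n * (n1^2 + n2^2)) / real_of_int (Phi2 n1 n2)) * a n1 * a n2)"

definition B1 :: "(int \<Rightarrow> complex) \<Rightarrow> int \<Rightarrow> complex" where
  "B1 a n = (if n = 0 then 0 else \<Sum>\<^sub>\<infinity>n1\<in>B1_index n. B1_term a n n1)"

definition B2_index :: "real \<Rightarrow> int \<Rightarrow> (int \<times> int \<times> int) set" where
  "B2_index c0 n = {(n1, n2, n3). n1 + n2 + n3 = n \<and>
     n1 \<noteq> 0 \<and> n2 \<noteq> 0 \<and> n3 \<noteq> 0 \<and> n1 \<noteq> n \<and> n2 \<noteq> n \<and> n3 \<noteq> n \<and> n2 + n3 \<noteq> 0 \<and>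
     \<bar>real_of_int (Phi3 n1 n2 n3)\<bar> \<ge> c0 * real_of_int (max \<bar>n1\<bar> (max \<bar>n2\<bar> \<bar>n3\<bar>)) ^ 4}"

definition B2_term :: "(int \<Rightarrow> complex) \<Rightarrow> int \<Rightarrow> int \<times> int \<times> int \<Rightarrow> complex" where
  "B2_term a n m = (case m of (n1, n2, n3) \<Rightarrow>
     complex_of_real (real_of_int (n * (n1^2 + (n2 + n3)^2) * (n2 + n3) * (n2^2 + n3^2))
        / (real_of_int (Phi2 n1 (n2 + n3)) * real_of_int (Phi3 n1 n2 n3)))
     * a n1 * a n2 * a n3)"

definition B2 :: "real \<Rightarrow> (int \<Rightarrow> complex) \<Rightarrow> int \<Rightarrow> complex" where
  "B2 c0 a n = (if n = 0 then 0 else \<Sum>\<^sub>\<infinity>m\<in>B2_index c0 n. B2_term a n m)"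

end

theory Submission
  imports Defs
begin

text \<open>Both multipliers gain a full derivative. With n = n1 + n2 one has
  Phi2(n1, n2) = 5 n1 n2 n (n1^2 + n1 n2 + n2^2), so the B1 multiplier is O(1 / (|n1| |n2|)),
  and on the nonresonant set |Phi3| >= c0 max |nj|^4 the B2 multiplier is O(1 / max |nj|^2).
  As |n| is at most three times the largest input frequency, <n>^(s+eps) times either multiplier
  is bounded by the sum of the <nj>^s. Hence, for f = <.>^s |a| (in l^2, with norm the H^s norm
  of a) and g = |a| (in l^1 when s > 1/2), the weighted coefficients of B1 a and B2 a are
  dominated by the convolutions f * g and f * g * g, and Young's inequalities l^2 * l^1 -> l^2
  and l^1 * l^1 -> l^1 give the quadratic and the cubic bound. The constant does not depend on
  a, which makes the estimate uniform in t.\<close>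

section \<open>Unconditional sums\<close>

lemma nonneg_summable_on_if_finite_sums_le:
  fixes f :: "'a \<Rightarrow> real"
  assumes "\<And>x. x \<in> A \<Longrightarrow> 0 \<le> f x" and "\<And>F. finite F \<Longrightarrow> F \<subseteq> A \<Longrightarrow> sum f F \<le> C"
  shows "f summable_on A" and "infsum f A \<le> C"
proof -
  show summable: "f summable_on A"
    by (rule nonneg_bdd_above_summable_on) (use assms in \<open>auto simp: bdd_above_def\<close>)
  show "infsum f A \<le> C"
    by (rule infsum_le_finite_sums[OF summable]) (use assms in auto)
qed

lemma norm_infsum_le_if_finite_sums_le:
  fixes t :: "'a \<Rightarrow> 'b::banach"
  assumes "0 < c" and "\<And>F. finite F \<Longrightarrow> F \<subseteq> A \<Longrightarrow> (\<Sum>x\<in>F. c * norm (t x)) \<le> D"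
  shows "t summable_on A" and "c * norm (infsum t A) \<le> D"
proof -
  have "(\<Sum>x\<in>F. norm (t x)) \<le> D / c" if "finite F" "F \<subseteq> A" for F
    using assms that by (simp add: pos_le_divide_eq mult.commute sum_distrib_left)
  then have norm_summable: "(\<lambda>x. norm (t x)) summable_on A"
    and norm_le: "infsum (\<lambda>x. norm (t x)) A \<le> D / c"
    using nonneg_summable_on_if_finite_sums_le[of A "\<lambda>x. norm (t x)"] by auto
  show "t summable_on A"
    by (rule abs_summable_summable[OF norm_summable])
  have "norm (infsum t A) \<le> D / c"
    using norm_infsum_bound[OF norm_summable] norm_le by linarith
  then show "c * norm (infsum t A) \<le> D"
    using assms(1) by (simp add: pos_le_divide_eq mult.commute)
qed

lemma summable_on_sum:
  fixes f :: "'i \<Rightarrow> 'a \<Rightarrow> 'b::topological_comm_monoid_add"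
  assumes "finite N" and "\<And>i. i \<in> N \<Longrightarrow> f i summable_on A"
  shows "(\<lambda>x. \<Sum>i\<in>N. f i x) summable_on A"
  using assms by (induction N rule: finite_induct) (auto intro: summable_on_add)

lemma infsum_sum:
  fixes f :: "'i \<Rightarrow> 'a \<Rightarrow> 'b::{topological_comm_monoid_add, t2_space}"
  assumes "finite N" and "\<And>i. i \<in> N \<Longrightarrow> f i summable_on A"
  shows "infsum (\<lambda>x. \<Sum>i\<in>N. f i x) A = (\<Sum>i\<in>N. infsum (f i) A)"
  using assms by (induction N rule: finite_induct) (simp_all add: infsum_add summable_on_sum)

lemma sum_comp_le_infsum:
  fixes g :: "'a \<Rightarrow> real"
  assumes "g summable_on UNIV" and "\<And>k. 0 \<le> g k" and "finite F" and "inj_on h F"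
  shows "(\<Sum>k\<in>F. g (h k)) \<le> infsum g UNIV"
  using assms finite_sum_le_infsum[of g UNIV "h ` F"] by (simp add: sum.reindex)

lemma sqrt_infsum_power2_cmult:
  fixes u :: "'a \<Rightarrow> real"
  assumes "0 \<le> c"
  shows "sqrt (\<Sum>\<^sub>\<infinity>x\<in>A. (c * u x)\<^sup>2) = c * sqrt (\<Sum>\<^sub>\<infinity>x\<in>A. (u x)\<^sup>2)"
  using assms by (simp add: power_mult_distrib infsum_cmult_right' real_sqrt_mult)

lemma minkowski_infsum:
  fixes u v :: "'a \<Rightarrow> real"
  assumes u: "(\<lambda>x. (u x)\<^sup>2) summable_on A" and v: "(\<lambda>x. (v x)\<^sup>2) summable_on A"
  shows "(\<lambda>x. (u x + v x)\<^sup>2) summable_on A"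
    and "sqrt (\<Sum>\<^sub>\<infinity>x\<in>A. (u x + v x)\<^sup>2) \<le> sqrt (\<Sum>\<^sub>\<infinity>x\<in>A. (u x)\<^sup>2) + sqrt (\<Sum>\<^sub>\<infinity>x\<in>A. (v x)\<^sup>2)"
proof -
  define U V where "U = sqrt (\<Sum>\<^sub>\<infinity>x\<in>A. (u x)\<^sup>2)" and "V = sqrt (\<Sum>\<^sub>\<infinity>x\<in>A. (v x)\<^sup>2)"
  have L2_le: "L2_set w F \<le> sqrt (\<Sum>\<^sub>\<infinity>x\<in>A. (w x)\<^sup>2)"
    if "(\<lambda>x. (w x)\<^sup>2) summable_on A" "finite F" "F \<subseteq> A" for w F
    unfolding L2_set_def using that by (intro real_sqrt_le_mono finite_sum_le_infsum) auto
  have "(\<Sum>x\<in>F. (u x + v x)\<^sup>2) \<le> (U + V)\<^sup>2" if "finite F" "F \<subseteq> A" for F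
  proof -
    have "(\<Sum>x\<in>F. (u x + v x)\<^sup>2) = (L2_set (\<lambda>x. u x + v x) F)\<^sup>2"
      by (simp add: L2_set_def sum_nonneg)
    also have "\<dots> \<le> (L2_set u F + L2_set v F)\<^sup>2"
      by (intro power_mono L2_set_triangle_ineq) simp
    also have "\<dots> \<le> (U + V)\<^sup>2"
      unfolding U_def V_def using that u v by (intro power_mono add_mono L2_le) auto
    finally show ?thesis .
  qed
  then show "(\<lambda>x. (u x + v x)\<^sup>2) summable_on A" and "sqrt (\<Sum>\<^sub>\<infinity>x\<in>A. (u x + v x)\<^sup>2) \<le> U + V"
    using nonneg_summable_on_if_finite_sums_le[of A "\<lambda>x. (u x + v x)\<^sup>2" "(U + V)\<^sup>2"]
      real_le_lsqrt[of "U + V"] by (auto simp: U_def V_def infsum_nonneg)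
qed

section \<open>Convolution on an abelian group\<close>

definition convolution :: "('a::ab_group_add \<Rightarrow> real) \<Rightarrow> ('a \<Rightarrow> real) \<Rightarrow> 'a \<Rightarrow> real" where
  "convolution f g n = (\<Sum>\<^sub>\<infinity>k. f k * g (n - k))"

lemma convolution_nonneg:
  "(\<And>k. 0 \<le> f k) \<Longrightarrow> (\<And>k. 0 \<le> g k) \<Longrightarrow> 0 \<le> convolution f g n"
  unfolding convolution_def by (intro infsum_nonneg mult_nonneg_nonneg) auto

lemma summable_on_convolution_summand:
  fixes f g :: "'a::ab_group_add \<Rightarrow> real"
  assumes "\<And>k. 0 \<le> f k" and "\<And>k. 0 \<le> g k" and "\<And>k. g k \<le> G" and "f summable_on UNIV"
  shows "(\<lambda>k. f k * g (n - k)) summable_on UNIV"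
proof (rule summable_on_comparison_test)
  show "(\<lambda>k. f k * G) summable_on UNIV"
    using assms(4) by (rule summable_on_cmult_left)
  show "f k * g (n - k) \<le> f k * G" "0 \<le> f k * g (n - k)" for k
    using assms(1-3) by (simp_all add: mult_left_mono)
qed

lemma young_convolution_l1:
  fixes f g :: "'a::ab_group_add \<Rightarrow> real"
  assumes f_nonneg: "\<And>k. 0 \<le> f k" and g_nonneg: "\<And>k. 0 \<le> g k"
    and f: "f summable_on UNIV" and g: "g summable_on UNIV"
  shows "(\<lambda>k. f k * g (n - k)) summable_on UNIV"
    and "convolution f g summable_on UNIV"
    and "infsum (convolution f g) UNIV \<le> infsum f UNIV * infsum g UNIV"
proof -
  define G where "G = infsum g UNIV"
  have g_le: "g j \<le> G" for j
    using finite_sum_le_infsum[OF g, of "{j}"] g_nonneg by (simp add: G_def)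
  have summand: "(\<lambda>k. f k * g (m - k)) summable_on UNIV" for m
    by (rule summable_on_convolution_summand[OF f_nonneg g_nonneg g_le f])
  then show "(\<lambda>k. f k * g (n - k)) summable_on UNIV" .
  have "sum (convolution f g) N \<le> infsum f UNIV * G" if "finite N" for N
  proof -
    have "sum (convolution f g) N = infsum (\<lambda>k. \<Sum>m\<in>N. f k * g (m - k)) UNIV"
      unfolding convolution_def using infsum_sum[OF \<open>finite N\<close>, of "\<lambda>m k. f k * g (m - k)"] summand
      by simp
    also have "\<dots> \<le> infsum (\<lambda>k. f k * G) UNIV"
    proof (rule infsum_mono)
      show "(\<lambda>k. \<Sum>m\<in>N. f k * g (m - k)) summable_on UNIV"
        using summable_on_sum[OF \<open>finite N\<close>, of "\<lambda>m k. f k * g (m - k)"] summand by simp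
      show "(\<lambda>k. f k * G) summable_on UNIV"
        using f by (rule summable_on_cmult_left)
      show "(\<Sum>m\<in>N. f k * g (m - k)) \<le> f k * G" for k
        unfolding sum_distrib_left[symmetric] G_def
        using sum_comp_le_infsum[OF g g_nonneg \<open>finite N\<close>, of "\<lambda>m. m - k"]
        by (intro mult_left_mono) (auto simp: f_nonneg inj_on_def)
    qed
    also have "\<dots> = infsum f UNIV * G"
      using f by (rule infsum_cmult_left)
    finally show ?thesis .
  qed
  then show "convolution f g summable_on UNIV"
    and "infsum (convolution f g) UNIV \<le> infsum f UNIV * infsum g UNIV"
    using nonneg_summable_on_if_finite_sums_le[of UNIV "convolution f g"]
    by (auto simp: G_def convolution_nonneg f_nonneg g_nonneg)
qed

text \<open>Cauchy-Schwarz with respect to the weights g (n - k).\<close>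

lemma convolution_power2_le:
  fixes f g :: "'a::ab_group_add \<Rightarrow> real"
  assumes f_nonneg: "\<And>k. 0 \<le> f k" and g_nonneg: "\<And>k. 0 \<le> g k"
    and f: "(\<lambda>k. (f k)\<^sup>2) summable_on UNIV" and g: "g summable_on UNIV"
  shows "(\<lambda>k. f k * g (n - k)) summable_on UNIV"
    and "(convolution f g n)\<^sup>2 \<le> infsum g UNIV * convolution (\<lambda>k. (f k)\<^sup>2) g n"
proof -
  define G H where "G = infsum g UNIV" and "H = convolution (\<lambda>k. (f k)\<^sup>2) g n"
  have H_nonneg: "0 \<le> H"
    unfolding H_def by (intro convolution_nonneg) (simp_all add: g_nonneg)
  have "(\<Sum>k\<in>F. f k * g (n - k)) \<le> sqrt (H * G)" if "finite F" for F
  proof -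
    have "(\<Sum>k\<in>F. (f k * sqrt (g (n - k))) * sqrt (g (n - k)))\<^sup>2
       \<le> (\<Sum>k\<in>F. (f k * sqrt (g (n - k)))\<^sup>2) * (\<Sum>k\<in>F. (sqrt (g (n - k)))\<^sup>2)"
      by (rule Cauchy_Schwarz_ineq_sum)
    also have "\<dots> = (\<Sum>k\<in>F. (f k)\<^sup>2 * g (n - k)) * (\<Sum>k\<in>F. g (n - k))"
      by (simp add: power_mult_distrib g_nonneg)
    also have "\<dots> \<le> H * G"
    proof (rule mult_mono)
      show "(\<Sum>k\<in>F. (f k)\<^sup>2 * g (n - k)) \<le> H"
        unfolding H_def convolution_def using young_convolution_l1(1)[OF _ g_nonneg f g] \<open>finite F\<close>
        by (intro finite_sum_le_infsum) (auto simp: g_nonneg)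
      show "(\<Sum>k\<in>F. g (n - k)) \<le> G"
        unfolding G_def using \<open>finite F\<close>
        by (intro sum_comp_le_infsum[OF g g_nonneg]) (auto simp: inj_on_def)
    qed (simp_all add: H_nonneg sum_nonneg g_nonneg)
    finally show ?thesis
      by (intro real_le_rsqrt) (simp add: mult.assoc g_nonneg flip: power2_eq_square)
  qed
  then have summable: "(\<lambda>k. f k * g (n - k)) summable_on UNIV"
    and le_sqrt: "convolution f g n \<le> sqrt (H * G)"
    using nonneg_summable_on_if_finite_sums_le[of UNIV "\<lambda>k. f k * g (n - k)"]
    by (auto simp: convolution_def f_nonneg g_nonneg)
  show "(\<lambda>k. f k * g (n - k)) summable_on UNIV"
    by (rule summable)
  have "(convolution f g n)\<^sup>2 \<le> (sqrt (H * G))\<^sup>2"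
    by (intro power_mono le_sqrt convolution_nonneg f_nonneg g_nonneg)
  moreover have "0 \<le> H * G"
    unfolding G_def using H_nonneg by (intro mult_nonneg_nonneg infsum_nonneg) (auto simp: g_nonneg)
  ultimately show "(convolution f g n)\<^sup>2 \<le> G * H"
    by (simp add: mult.commute)
qed

lemma young_convolution_l2_l1:
  fixes f g :: "'a::ab_group_add \<Rightarrow> real"
  assumes f_nonneg: "\<And>k. 0 \<le> f k" and g_nonneg: "\<And>k. 0 \<le> g k"
    and f: "(\<lambda>k. (f k)\<^sup>2) summable_on UNIV" and g: "g summable_on UNIV"
  shows "(\<lambda>k. f k * g (n - k)) summable_on UNIV"
    and "(\<lambda>n. (convolution f g n)\<^sup>2) summable_on UNIV"
    and "infsum (\<lambda>n. (convolution f g n)\<^sup>2) UNIV \<le> infsum (\<lambda>k. (f k)\<^sup>2) UNIV * (infsum g UNIV)\<^sup>2"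
proof -
  define G H where "G = infsum g UNIV" and "H = convolution (\<lambda>k. (f k)\<^sup>2) g"
  note pointwise = convolution_power2_le[OF f_nonneg g_nonneg f g, folded G_def H_def]
  note young_l1 = young_convolution_l1[of "\<lambda>k. (f k)\<^sup>2" g, OF _ g_nonneg f g, folded G_def H_def, simplified]
  have G_nonneg: "0 \<le> G"
    unfolding G_def by (intro infsum_nonneg) (simp add: g_nonneg)
  have GH: "(\<lambda>n. G * H n) summable_on UNIV"
    by (intro summable_on_cmult_right young_l1(2))
  show "(\<lambda>k. f k * g (n - k)) summable_on UNIV"
    by (rule pointwise(1))
  show summable: "(\<lambda>n. (convolution f g n)\<^sup>2) summable_on UNIV"
    by (rule summable_on_comparison_test[OF GH]) (use pointwise(2) in auto)
  have "infsum (\<lambda>n. (convolution f g n)\<^sup>2) UNIV \<le> infsum (\<lambda>n. G * H n) UNIV"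
    by (rule infsum_mono[OF summable GH pointwise(2)])
  also have "\<dots> = G * infsum H UNIV"
    by (intro infsum_cmult_right young_l1(2))
  also have "\<dots> \<le> G * (infsum (\<lambda>k. (f k)\<^sup>2) UNIV * G)"
    by (intro mult_left_mono young_l1(3) G_nonneg)
  finally show "infsum (\<lambda>n. (convolution f g n)\<^sup>2) UNIV \<le> infsum (\<lambda>k. (f k)\<^sup>2) UNIV * (infsum g UNIV)\<^sup>2"
    by (simp add: G_def power2_eq_square mult_ac)
qed

lemma l2_norm_convolution_le:
  fixes f g :: "'a::ab_group_add \<Rightarrow> real"
  assumes "\<And>k. 0 \<le> f k" and "\<And>k. 0 \<le> g k"
    and "(\<lambda>k. (f k)\<^sup>2) summable_on UNIV" and "g summable_on UNIV"
  shows "sqrt (\<Sum>\<^sub>\<infinity>n. (convolution f g n)\<^sup>2) \<le> sqrt (\<Sum>\<^sub>\<infinity>k. (f k)\<^sup>2) * infsum g UNIV"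
proof -
  have "sqrt (\<Sum>\<^sub>\<infinity>n. (convolution f g n)\<^sup>2) \<le> sqrt ((\<Sum>\<^sub>\<infinity>k. (f k)\<^sup>2) * (infsum g UNIV)\<^sup>2)"
    using young_convolution_l2_l1(3)[OF assms] by simp
  also have "\<dots> = sqrt (\<Sum>\<^sub>\<infinity>k. (f k)\<^sup>2) * infsum g UNIV"
    using assms(2) by (simp add: real_sqrt_mult infsum_nonneg)
  finally show ?thesis .
qed

lemma sum_triples_le_convolution:
  fixes f g h :: "'a::ab_group_add \<Rightarrow> real"
  assumes f_nonneg: "\<And>k. 0 \<le> f k" and g_nonneg: "\<And>k. 0 \<le> g k" and h_nonneg: "\<And>k. 0 \<le> h k"
    and f: "(\<lambda>k. (f k)\<^sup>2) summable_on UNIV" and g: "g summable_on UNIV" and h: "h summable_on UNIV"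
    and T: "finite T" "T \<subseteq> {(x, y, z). x + y + z = n}"
  shows "(\<Sum>(x, y, z)\<in>T. f x * g y * h z) \<le> convolution f (convolution g h) n"
proof -
  define X where "X = fst ` T"
  define Y where "Y = (fst \<circ> snd) ` T"
  define triple where "triple = (\<lambda>(x, y). (x, y, n - x - y))"
  have finite: "finite X" "finite Y"
    using T by (auto simp: X_def Y_def)
  have T_sub: "T \<subseteq> triple ` (X \<times> Y)"
  proof
    fix t assume "t \<in> T"
    moreover obtain x y z where t: "t = (x, y, z)" by (cases t)
    ultimately have "z = n - x - y" "x \<in> X" "y \<in> Y"
      using T by (force simp: X_def Y_def)+
    then show "t \<in> triple ` (X \<times> Y)"
      unfolding t triple_def by (auto intro!: image_eqI[where x="(x, y)"])
  qed
  have inj: "inj_on triple (X \<times> Y)"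
    by (auto simp: triple_def inj_on_def)
  note gh = young_convolution_l1[OF g_nonneg h_nonneg g h]
  have gh_nonneg: "0 \<le> convolution g h k" for k
    by (rule convolution_nonneg[OF g_nonneg h_nonneg])
  note f_gh = young_convolution_l2_l1[OF f_nonneg gh_nonneg f gh(2)]
  have "(\<Sum>(x, y, z)\<in>T. f x * g y * h z) \<le> (\<Sum>(x, y, z)\<in>triple ` (X \<times> Y). f x * g y * h z)"
    using finite T_sub by (intro sum_mono2) (auto simp: f_nonneg g_nonneg h_nonneg)
  also have "\<dots> = (\<Sum>(x, y)\<in>X \<times> Y. f x * g y * h (n - x - y))"
    by (subst sum.reindex[OF inj]) (simp add: triple_def case_prod_beta)
  also have "\<dots> = (\<Sum>x\<in>X. f x * (\<Sum>y\<in>Y. g y * h ((n - x) - y)))"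
    by (simp add: sum.cartesian_product[symmetric] sum_distrib_left mult.assoc diff_diff_eq)
  also have "\<dots> \<le> (\<Sum>x\<in>X. f x * convolution g h (n - x))"
    unfolding convolution_def using gh(1) finite h_nonneg g_nonneg
    by (intro sum_mono mult_left_mono finite_sum_le_infsum) (auto simp: f_nonneg)
  also have "\<dots> \<le> convolution f (convolution g h) n"
    unfolding convolution_def[of f] using f_gh(1) finite f_nonneg gh_nonneg
    by (intro finite_sum_le_infsum) auto
  finally show ?thesis .
qed

section \<open>The Japanese bracket <x>^s = (1 + x^2)^(s/2)\<close>

definition jbracket :: "real \<Rightarrow> real \<Rightarrow> real" where
  "jbracket s x = (1 + x\<^sup>2) powr (s / 2)"

lemma one_add_power2_pos: "0 < 1 + (x::real)\<^sup>2"
  by (metis add_pos_nonneg zero_le_power2 zero_less_one)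

lemma jbracket_pos: "0 < jbracket s x"
  unfolding jbracket_def using one_add_power2_pos[of x] by simp

lemma jbracket_nonneg: "0 \<le> jbracket s x"
  using jbracket_pos[of s x] by linarith

lemma jbracket_abs [simp]: "jbracket s \<bar>x\<bar> = jbracket s x"
  by (simp add: jbracket_def)

lemma jbracket_zero [simp]: "jbracket 0 x = 1"
  using one_add_power2_pos[of x] by (simp add: jbracket_def)

lemma jbracket_add: "jbracket (s + t) x = jbracket s x * jbracket t x"
  unfolding jbracket_def by (simp add: add_divide_distrib powr_add)

lemma jbracket_power2: "(jbracket s x)\<^sup>2 = (1 + x\<^sup>2) powr s"
  using one_add_power2_pos[of x] by (simp add: jbracket_def powr_power)

lemma jbracket_mono:
  assumes "0 \<le> s" and "\<bar>x\<bar> \<le> \<bar>y\<bar>"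
  shows "jbracket s x \<le> jbracket s y"
proof -
  have "x\<^sup>2 \<le> y\<^sup>2"
    using assms(2) by (metis abs_ge_zero power2_abs power_mono)
  then show ?thesis
    unfolding jbracket_def using assms(1) by (intro powr_mono2) auto
qed

lemma jbracket_mono_exponent:
  assumes "s \<le> t"
  shows "jbracket s x \<le> jbracket t x"
  unfolding jbracket_def using assms by (intro powr_mono) auto

lemma jbracket_scale_le:
  assumes "0 \<le> s" and "1 \<le> c"
  shows "jbracket s (c * x) \<le> c powr s * jbracket s x"
proof -
  have "1 \<le> c\<^sup>2"
    using assms(2) by (simp add: one_le_power)
  then have "1 + (c * x)\<^sup>2 \<le> c\<^sup>2 * (1 + x\<^sup>2)"
    by (simp add: power_mult_distrib algebra_simps)
  then have "jbracket s (c * x) \<le> (c\<^sup>2 * (1 + x\<^sup>2)) powr (s / 2)"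
    unfolding jbracket_def using assms(1) by (intro powr_mono2) auto
  also have "\<dots> = (c powr 2) powr (s / 2) * jbracket s x"
    using assms(2) by (simp add: jbracket_def powr_mult)
  also have "\<dots> = c powr s * jbracket s x"
    by (simp add: powr_powr)
  finally show ?thesis .
qed

lemma jbracket_one_le:
  assumes "1 \<le> \<bar>x\<bar>"
  shows "jbracket 1 x \<le> 2 * \<bar>x\<bar>"
proof -
  have "1 \<le> x\<^sup>2"
    using assms by (metis abs_ge_zero one_le_power power2_abs)
  then have "1 + x\<^sup>2 \<le> (2 * \<bar>x\<bar>)\<^sup>2"
    by (simp add: power_mult_distrib)
  then have "sqrt (1 + x\<^sup>2) \<le> sqrt ((2 * \<bar>x\<bar>)\<^sup>2)"
    by (rule real_sqrt_le_mono)
  also have "\<dots> = 2 * \<bar>x\<bar>"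
    by (simp only: real_sqrt_abs)
  finally have "sqrt (1 + x\<^sup>2) \<le> 2 * \<bar>x\<bar>" .
  moreover have "jbracket 1 x = sqrt (1 + x\<^sup>2)"
    using one_add_power2_pos[of x] by (simp add: jbracket_def powr_half_sqrt)
  ultimately show ?thesis by simp
qed

lemma jbracket_max_le: "jbracket s (max \<bar>x\<bar> (max \<bar>y\<bar> \<bar>z\<bar>)) \<le> jbracket s x + jbracket s y + jbracket s z"
  using jbracket_nonneg[of s x] jbracket_nonneg[of s y] jbracket_nonneg[of s z]
  by (cases rule: linorder_le_cases[of "\<bar>y\<bar>" "\<bar>z\<bar>"];
      cases rule: linorder_le_cases[of "\<bar>x\<bar>" "max \<bar>y\<bar> \<bar>z\<bar>"]) (simp_all add: max_def)

lemma jbracket_gain_le: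
  assumes "0 \<le> s" "0 \<le> \<epsilon>" "\<epsilon> \<le> 1" "1 \<le> c" "1 \<le> \<bar>x\<bar>" "\<bar>z\<bar> \<le> c * \<bar>x\<bar>"
  shows "jbracket (s + \<epsilon>) z \<le> 2 * c powr (s + 1) * \<bar>x\<bar> * jbracket s x"
proof -
  have "jbracket (s + \<epsilon>) z \<le> jbracket (s + 1) z"
    using assms by (intro jbracket_mono_exponent) auto
  also have "\<dots> \<le> jbracket (s + 1) (c * \<bar>x\<bar>)"
    using assms by (intro jbracket_mono) auto
  also have "\<dots> \<le> c powr (s + 1) * jbracket (s + 1) x"
    using assms jbracket_scale_le[of "s + 1" c "\<bar>x\<bar>"] by simp
  also have "\<dots> = c powr (s + 1) * jbracket s x * jbracket 1 x"
    by (simp add: jbracket_add)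
  also have "\<dots> \<le> c powr (s + 1) * jbracket s x * (2 * \<bar>x\<bar>)"
    using assms by (intro mult_left_mono jbracket_one_le) (auto simp: jbracket_nonneg)
  finally show ?thesis by (simp add: mult_ac)
qed

section \<open>Multiplier bounds\<close>

definition B1_symbol :: "real \<Rightarrow> real \<Rightarrow> real" where
  "B1_symbol x y = (x + y) * (x\<^sup>2 + y\<^sup>2) / ((x + y) ^ 5 - x ^ 5 - y ^ 5)"

definition B2_symbol :: "real \<Rightarrow> real \<Rightarrow> real \<Rightarrow> real" where
  "B2_symbol x y z =
     B1_symbol x (y + z) * ((y + z) * (y\<^sup>2 + z\<^sup>2) / ((x + y + z) ^ 5 - x ^ 5 - y ^ 5 - z ^ 5))"

lemma B1_symbol_commute: "B1_symbol y x = B1_symbol x y"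
  unfolding B1_symbol_def by (simp add: add.commute diff_diff_eq)

lemma quintic_difference_factor:
  fixes x y :: real
  shows "(x + y) ^ 5 - x ^ 5 - y ^ 5 = 5 * x * y * (x + y) * (x\<^sup>2 + x * y + y\<^sup>2)"
  by algebra

lemma abs_B1_symbol_le:
  assumes "x \<noteq> 0" and "y \<noteq> 0"
  shows "\<bar>B1_symbol x y\<bar> \<le> 2 / (5 * \<bar>x\<bar> * \<bar>y\<bar>)"
proof (cases "x + y = 0")
  case False
  define Q where "Q = x\<^sup>2 + x * y + y\<^sup>2"
  have twice_Q: "2 * Q = x\<^sup>2 + y\<^sup>2 + (x + y)\<^sup>2"
    unfolding Q_def by (simp add: power2_eq_square algebra_simps)
  have "0 < x\<^sup>2" "0 < y\<^sup>2"
    using assms by auto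
  then have Q_pos: "0 < Q" and Q_ge: "x\<^sup>2 + y\<^sup>2 \<le> 2 * Q"
    using twice_Q zero_le_power2[of "x + y"] by linarith+
  have "5 * x * y * (x + y) * Q = (x + y) * (5 * x * y * Q)"
    by (simp add: algebra_simps)
  then have "B1_symbol x y = (x\<^sup>2 + y\<^sup>2) / (5 * x * y * Q)"
    unfolding B1_symbol_def quintic_difference_factor Q_def[symmetric] using False by simp
  then have "\<bar>B1_symbol x y\<bar> = (x\<^sup>2 + y\<^sup>2) / (5 * \<bar>x\<bar> * \<bar>y\<bar> * Q)"
    using Q_pos by (simp add: abs_mult)
  also have "\<dots> \<le> (2 * Q) / (5 * \<bar>x\<bar> * \<bar>y\<bar> * Q)"
    using Q_ge Q_pos assms by (intro divide_right_mono) auto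
  also have "\<dots> = 2 / (5 * \<bar>x\<bar> * \<bar>y\<bar>)"
    using Q_pos by simp
  finally show ?thesis .
qed (simp add: B1_symbol_def)

lemma B1_symbol_weighted_le_dominant:
  assumes "0 \<le> s" "0 \<le> \<epsilon>" "\<epsilon> \<le> 1" "1 \<le> \<bar>y\<bar>" "\<bar>y\<bar> \<le> \<bar>x\<bar>"
  shows "jbracket (s + \<epsilon>) (x + y) * \<bar>B1_symbol x y\<bar> \<le> 2 powr (s + 1) * jbracket s x"
proof -
  have "jbracket (s + \<epsilon>) (x + y) \<le> 2 * 2 powr (s + 1) * \<bar>x\<bar> * jbracket s x"
    using assms by (intro jbracket_gain_le) auto
  moreover have "\<bar>B1_symbol x y\<bar> \<le> 2 / (5 * \<bar>x\<bar>)"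
  proof -
    have "\<bar>B1_symbol x y\<bar> \<le> 2 / (5 * \<bar>x\<bar> * \<bar>y\<bar>)"
      using assms by (intro abs_B1_symbol_le) auto
    also have "\<dots> \<le> 2 / (5 * \<bar>x\<bar>)"
      using assms by (intro divide_left_mono) (auto simp: mult_le_cancel_left1)
    finally show ?thesis .
  qed
  ultimately have "jbracket (s + \<epsilon>) (x + y) * \<bar>B1_symbol x y\<bar>
      \<le> (2 * 2 powr (s + 1) * \<bar>x\<bar> * jbracket s x) * (2 / (5 * \<bar>x\<bar>))"
    by (intro mult_mono) (auto simp: jbracket_nonneg)
  also have "\<dots> = 4 / 5 * (2 powr (s + 1) * jbracket s x)"
    using assms by (auto simp: field_simps)
  also have "\<dots> \<le> 2 powr (s + 1) * jbracket s x"
    by (simp add: jbracket_nonneg)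
  finally show ?thesis .
qed

lemma B1_symbol_weighted_le:
  assumes "0 \<le> s" "0 \<le> \<epsilon>" "\<epsilon> \<le> 1" "1 \<le> \<bar>x\<bar>" "1 \<le> \<bar>y\<bar>"
  shows "jbracket (s + \<epsilon>) (x + y) * \<bar>B1_symbol x y\<bar> \<le> 2 powr (s + 1) * (jbracket s x + jbracket s y)"
proof -
  have "0 \<le> 2 powr (s + 1) * jbracket s x" "0 \<le> 2 powr (s + 1) * jbracket s y"
    by (simp_all add: jbracket_nonneg)
  moreover have "jbracket (s + \<epsilon>) (x + y) * \<bar>B1_symbol x y\<bar>
      \<le> max (2 powr (s + 1) * jbracket s x) (2 powr (s + 1) * jbracket s y)"
  proof (cases "\<bar>y\<bar> \<le> \<bar>x\<bar>")
    case True
    then show ?thesis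
      using B1_symbol_weighted_le_dominant[OF assms(1-3) assms(5) True] by (simp add: le_max_iff_disj)
  next
    case False
    then have "\<bar>x\<bar> \<le> \<bar>y\<bar>"
      by linarith
    have "jbracket (s + \<epsilon>) (x + y) * \<bar>B1_symbol x y\<bar> = jbracket (s + \<epsilon>) (y + x) * \<bar>B1_symbol y x\<bar>"
      by (simp only: add.commute B1_symbol_commute)
    then show ?thesis
      using B1_symbol_weighted_le_dominant[OF assms(1-4) \<open>\<bar>x\<bar> \<le> \<bar>y\<bar>\<close>] by (simp add: le_max_iff_disj)
  qed
  ultimately show ?thesis
    unfolding distrib_left by linarith
qed

lemma abs_B2_symbol_le:
  assumes c0: "0 < c0" and x: "1 \<le> \<bar>x\<bar>" and yz: "y + z \<noteq> 0"
    and M: "\<bar>x\<bar> \<le> M" "\<bar>y\<bar> \<le> M" "\<bar>z\<bar> \<le> M"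
    and resonance: "c0 * M ^ 4 \<le> \<bar>(x + y + z) ^ 5 - x ^ 5 - y ^ 5 - z ^ 5\<bar>"
  shows "\<bar>B2_symbol x y z\<bar> \<le> 4 / (5 * c0 * M\<^sup>2)"
proof -
  define P where "P = \<bar>(x + y + z) ^ 5 - x ^ 5 - y ^ 5 - z ^ 5\<bar>"
  have M_ge: "1 \<le> M"
    using x M by linarith
  have P_ge: "c0 * M ^ 4 \<le> P"
    using resonance by (simp add: P_def)
  moreover have "0 < c0 * M ^ 4"
    using c0 M_ge by simp
  ultimately have P_pos: "0 < P"
    by linarith
  have "y\<^sup>2 \<le> M\<^sup>2" "z\<^sup>2 \<le> M\<^sup>2"
    using M by (metis abs_ge_zero power2_abs power_mono)+
  then have yz_le: "y\<^sup>2 + z\<^sup>2 \<le> 2 * M\<^sup>2"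
    by simp
  have "\<bar>B2_symbol x y z\<bar> = \<bar>B1_symbol x (y + z)\<bar> * (\<bar>y + z\<bar> * (y\<^sup>2 + z\<^sup>2) / P)"
    by (simp add: B2_symbol_def P_def abs_mult)
  also have "\<dots> \<le> 2 / (5 * \<bar>x\<bar> * \<bar>y + z\<bar>) * (\<bar>y + z\<bar> * (y\<^sup>2 + z\<^sup>2) / P)"
    using x yz P_pos by (intro mult_right_mono abs_B1_symbol_le) auto
  also have "\<dots> = 2 * (y\<^sup>2 + z\<^sup>2) / (5 * \<bar>x\<bar> * P)"
    using x yz P_pos by (simp add: field_simps)
  also have "\<dots> \<le> 2 * (2 * M\<^sup>2) / (5 * 1 * (c0 * M ^ 4))"
    using c0 x P_ge M_ge yz_le by (intro frac_le mult_mono) auto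
  also have "\<dots> = 4 / (5 * c0 * M\<^sup>2)"
    using c0 M_ge by (simp add: field_simps power_numeral_reduce)
  finally show ?thesis .
qed

lemma B2_symbol_weighted_le:
  assumes s\<epsilon>: "0 \<le> s" "0 \<le> \<epsilon>" "\<epsilon> \<le> 1" and c0: "0 < c0" and x: "1 \<le> \<bar>x\<bar>"
    and yz: "y + z \<noteq> 0"
    and resonance: "c0 * (max \<bar>x\<bar> (max \<bar>y\<bar> \<bar>z\<bar>)) ^ 4 \<le> \<bar>(x + y + z) ^ 5 - x ^ 5 - y ^ 5 - z ^ 5\<bar>"
  shows "jbracket (s + \<epsilon>) (x + y + z) * \<bar>B2_symbol x y z\<bar>
    \<le> 3 powr (s + 1) * (2 / c0) * (jbracket s x + jbracket s y + jbracket s z)"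
proof -
  define M where "M = max \<bar>x\<bar> (max \<bar>y\<bar> \<bar>z\<bar>)"
  define W where "W = 3 powr (s + 1) * jbracket s M"
  have M_ge: "1 \<le> M" "\<bar>x\<bar> \<le> M" "\<bar>y\<bar> \<le> M" "\<bar>z\<bar> \<le> M"
    using x by (auto simp: M_def le_max_iff_disj)
  have W_nonneg: "0 \<le> W"
    by (simp add: W_def jbracket_nonneg)
  have "\<bar>x + y + z\<bar> \<le> 3 * \<bar>M\<bar>"
    using M_ge abs_triangle_ineq[of x "y + z"] abs_triangle_ineq[of y z] by linarith
  then have "jbracket (s + \<epsilon>) (x + y + z) \<le> 2 * 3 powr (s + 1) * \<bar>M\<bar> * jbracket s M"
    using s\<epsilon> M_ge by (intro jbracket_gain_le) auto
  also have "\<dots> = 2 * M * W"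
    using M_ge by (simp add: W_def)
  finally have "jbracket (s + \<epsilon>) (x + y + z) \<le> 2 * M * W" .
  moreover have "\<bar>B2_symbol x y z\<bar> \<le> 4 / (5 * c0 * M\<^sup>2)"
    using c0 x yz M_ge resonance[folded M_def] by (intro abs_B2_symbol_le)
  ultimately have "jbracket (s + \<epsilon>) (x + y + z) * \<bar>B2_symbol x y z\<bar> \<le> (2 * M * W) * (4 / (5 * c0 * M\<^sup>2))"
    using M_ge W_nonneg by (intro mult_mono) auto
  also have "\<dots> = 8 / (5 * M) * (W / c0)"
    using M_ge c0 by (simp add: field_simps power2_eq_square)
  also have "\<dots> \<le> 2 * (W / c0)"
    using M_ge c0 W_nonneg by (intro mult_right_mono) (auto simp: divide_le_eq)
  also have "\<dots> \<le> 3 powr (s + 1) * (2 / c0) * (jbracket s x + jbracket s y + jbracket s z)"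
    using jbracket_max_le[of s x y z] c0 by (simp add: W_def M_def mult_left_mono divide_right_mono)
  finally show ?thesis .
qed

section \<open>Sobolev norms of Fourier coefficients\<close>

lemma summable_on_one_add_power2_powr_neg:
  assumes "1/2 < s"
  shows "(\<lambda>n::int. (1 + (real_of_int n)\<^sup>2) powr (-s)) summable_on UNIV"
proof -
  define w where "w x = (1 + x\<^sup>2) powr (-s)" for x :: real
  have "summable (\<lambda>n. real n powr (-2 * s))"
    using summable_real_powr_iff[of "-2 * s"] assms by simp
  then have "summable (\<lambda>n. w (real n))"
  proof (rule summable_comparison_test'[where N=1])
    fix n :: nat assume "1 \<le> n"
    then have "w (real n) \<le> (real n powr 2) powr (-s)"
      unfolding w_def using assms by (intro powr_mono2') auto
    also have "\<dots> = real n powr (-2 * s)"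
      by (simp only: powr_powr) simp
    finally show "norm (w (real n)) \<le> real n powr (-2 * s)"
      by (simp add: w_def)
  qed
  then have nat: "(\<lambda>n. w (real n)) summable_on UNIV"
    by (rule summable_nonneg_imp_summable_on) (simp add: w_def)
  have "(\<lambda>n. w (real_of_int n)) summable_on int ` UNIV"
    using nat by (subst summable_on_reindex) (auto simp: o_def)
  moreover have "(\<lambda>n. w (real_of_int n)) summable_on (\<lambda>n. - int n) ` UNIV"
    using nat by (subst summable_on_reindex) (auto simp: o_def inj_on_def w_def)
  ultimately have "(\<lambda>n. w (real_of_int n)) summable_on (int ` UNIV \<union> (\<lambda>n. - int n) ` UNIV)"
    by (rule summable_on_union)
  moreover have "int ` UNIV \<union> (\<lambda>n. - int n) ` UNIV = UNIV"
  proof -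
    have "k \<in> int ` UNIV \<union> (\<lambda>n. - int n) ` UNIV" for k :: int
      by (cases "0 \<le> k") (auto intro: image_eqI[where x="nat k"] image_eqI[where x="nat (- k)"])
    then show ?thesis by blast
  qed
  ultimately show ?thesis
    by (simp add: w_def)
qed

lemma Hs_norm_nonneg: "0 \<le> Hs_norm s a"
  unfolding Hs_norm_def by (simp add: infsum_nonneg)

lemma Hs_summand_eq: "(1 + (real_of_int n)\<^sup>2) powr s * (cmod (a n))\<^sup>2 = (jbracket s n * cmod (a n))\<^sup>2"
  by (simp add: power_mult_distrib jbracket_power2)

lemma in_Hs_iff_weighted_l2: "in_Hs s a \<longleftrightarrow> (\<lambda>n. (jbracket s n * cmod (a n))\<^sup>2) summable_on UNIV"
  by (simp add: in_Hs_def Hs_summand_eq)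

lemma Hs_norm_eq: "Hs_norm s a = sqrt (\<Sum>\<^sub>\<infinity>n. (jbracket s n * cmod (a n))\<^sup>2)"
  by (simp add: Hs_norm_def Hs_summand_eq)

lemma Hs_norm_power2: "(Hs_norm s a)\<^sup>2 = (\<Sum>\<^sub>\<infinity>n. (jbracket s n * cmod (a n))\<^sup>2)"
  by (simp add: Hs_norm_eq infsum_nonneg)

lemma Hs_norm_le_if_dominated:
  fixes b :: "int \<Rightarrow> complex" and h :: "int \<Rightarrow> real"
  assumes "\<And>n. jbracket s n * cmod (b n) \<le> h n" and "(\<lambda>n. (h n)\<^sup>2) summable_on UNIV"
  shows "in_Hs s b" and "Hs_norm s b \<le> sqrt (\<Sum>\<^sub>\<infinity>n. (h n)\<^sup>2)"
proof -
  have le: "(jbracket s n * cmod (b n))\<^sup>2 \<le> (h n)\<^sup>2" for n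
    using assms(1)[of n] by (intro power_mono) (auto simp: jbracket_nonneg)
  show summable: "in_Hs s b"
    unfolding in_Hs_iff_weighted_l2 using le by (intro summable_on_comparison_test[OF assms(2)]) auto
  show "Hs_norm s b \<le> sqrt (\<Sum>\<^sub>\<infinity>n. (h n)\<^sup>2)"
    unfolding Hs_norm_eq using summable assms(2) le
    by (intro real_sqrt_le_mono infsum_mono) (auto simp: in_Hs_iff_weighted_l2)
qed

definition Hs_l1_const :: "real \<Rightarrow> real" where
  "Hs_l1_const s = sqrt (\<Sum>\<^sub>\<infinity>n::int. (1 + (real_of_int n)\<^sup>2) powr (-s))"

lemma Hs_l1_const_nonneg: "0 \<le> Hs_l1_const s"
  by (simp add: Hs_l1_const_def infsum_nonneg)

lemma Hs_l1_embedding: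
  assumes "1/2 < s" and "in_Hs s a"
  shows "(\<lambda>n. cmod (a n)) summable_on UNIV"
    and "(\<Sum>\<^sub>\<infinity>n. cmod (a n)) \<le> Hs_l1_const s * Hs_norm s a"
proof -
  note weight = summable_on_one_add_power2_powr_neg[OF assms(1)]
  have "(\<Sum>n\<in>F. cmod (a n)) \<le> Hs_l1_const s * Hs_norm s a" if "finite F" for F
  proof -
    have "(\<Sum>n\<in>F. cmod (a n)) = (\<Sum>n\<in>F. jbracket (-s) n * (jbracket s n * cmod (a n)))"
      by (intro sum.cong) (simp_all flip: mult.assoc jbracket_add)
    also have "\<dots>\<^sup>2 \<le> (\<Sum>n\<in>F. (jbracket (-s) n)\<^sup>2) * (\<Sum>n\<in>F. (jbracket s n * cmod (a n))\<^sup>2)"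
      by (rule Cauchy_Schwarz_ineq_sum)
    also have "\<dots> \<le> (Hs_l1_const s)\<^sup>2 * (Hs_norm s a)\<^sup>2"
    proof (rule mult_mono)
      show "(\<Sum>n\<in>F. (jbracket (-s) n)\<^sup>2) \<le> (Hs_l1_const s)\<^sup>2"
        unfolding jbracket_power2 Hs_l1_const_def using weight \<open>finite F\<close>
        by (simp add: infsum_nonneg finite_sum_le_infsum)
      show "(\<Sum>n\<in>F. (jbracket s n * cmod (a n))\<^sup>2) \<le> (Hs_norm s a)\<^sup>2"
        unfolding Hs_norm_power2 using assms(2) \<open>finite F\<close>
        by (simp add: finite_sum_le_infsum in_Hs_iff_weighted_l2)
    qed (simp_all add: sum_nonneg)
    finally have "(\<Sum>n\<in>F. cmod (a n))\<^sup>2 \<le> (Hs_l1_const s * Hs_norm s a)\<^sup>2"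
      by (simp add: power_mult_distrib)
    then show ?thesis
      by (rule power2_le_imp_le) (simp add: Hs_l1_const_nonneg Hs_norm_nonneg)
  qed
  then show "(\<lambda>n. cmod (a n)) summable_on UNIV" and "(\<Sum>\<^sub>\<infinity>n. cmod (a n)) \<le> Hs_l1_const s * Hs_norm s a"
    using nonneg_summable_on_if_finite_sums_le[of UNIV "\<lambda>n. cmod (a n)"] by auto
qed

section \<open>The quadratic and cubic terms\<close>

lemma norm_B1_term:
  "cmod (B1_term a n k) = \<bar>B1_symbol k (n - k)\<bar> * cmod (a k) * cmod (a (n - k))"
proof -
  have "real_of_int (n * (k\<^sup>2 + (n - k)\<^sup>2)) / real_of_int (Phi2 k (n - k)) = B1_symbol k (n - k)"
    by (simp add: B1_symbol_def Phi2_def)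
  then show ?thesis
    by (simp only: B1_term_def Let_def norm_mult norm_of_real)
qed

lemma norm_B2_term:
  assumes "n1 + n2 + n3 = n"
  shows "cmod (B2_term a n (n1, n2, n3)) = \<bar>B2_symbol n1 n2 n3\<bar> * cmod (a n1) * cmod (a n2) * cmod (a n3)"
proof -
  have "real_of_int (n * (n1\<^sup>2 + (n2 + n3)\<^sup>2) * (n2 + n3) * (n2\<^sup>2 + n3\<^sup>2))
      / (real_of_int (Phi2 n1 (n2 + n3)) * real_of_int (Phi3 n1 n2 n3)) = B2_symbol n1 n2 n3"
    unfolding B2_symbol_def B1_symbol_def Phi2_def Phi3_def using assms[symmetric]
    by (simp add: add.assoc)
  then show ?thesis
    by (simp only: B2_term_def prod.case norm_mult norm_of_real)
qed

lemma B1_term_weighted_le: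
  assumes "0 \<le> s" "0 \<le> \<epsilon>" "\<epsilon> \<le> 1" "k \<in> B1_index n"
  shows "jbracket (s + \<epsilon>) n * cmod (B1_term a n k)
    \<le> 2 powr (s + 1) * (jbracket s k * cmod (a k) * cmod (a (n - k))
                        + jbracket s (n - k) * cmod (a (n - k)) * cmod (a k))"
proof -
  have "1 \<le> \<bar>real_of_int k\<bar>" "1 \<le> \<bar>real_of_int (n - k)\<bar>"
    using assms(4) by (auto simp: B1_index_def)
  then have "jbracket (s + \<epsilon>) n * \<bar>B1_symbol k (n - k)\<bar> \<le> 2 powr (s + 1) * (jbracket s k + jbracket s (n - k))"
    using B1_symbol_weighted_le[of s \<epsilon> "real_of_int k" "real_of_int (n - k)"] assms by simp
  then have "jbracket (s + \<epsilon>) n * \<bar>B1_symbol k (n - k)\<bar> * (cmod (a k) * cmod (a (n - k)))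
      \<le> 2 powr (s + 1) * (jbracket s k + jbracket s (n - k)) * (cmod (a k) * cmod (a (n - k)))"
    by (rule mult_right_mono) simp
  then show ?thesis
    unfolding norm_B1_term by (simp add: algebra_simps)
qed

lemma B2_term_weighted_le:
  assumes "0 \<le> s" "0 \<le> \<epsilon>" "\<epsilon> \<le> 1" "0 < c0" "(n1, n2, n3) \<in> B2_index c0 n"
  shows "jbracket (s + \<epsilon>) n * cmod (B2_term a n (n1, n2, n3))
    \<le> 3 powr (s + 1) * (2 / c0) * (jbracket s n1 * cmod (a n1) * cmod (a n2) * cmod (a n3)
        + jbracket s n2 * cmod (a n2) * cmod (a n1) * cmod (a n3)
        + jbracket s n3 * cmod (a n3) * cmod (a n1) * cmod (a n2))"
proof -
  have sum: "n1 + n2 + n3 = n" and n1: "n1 \<noteq> 0" and n23: "n2 + n3 \<noteq> 0"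
    and resonance: "c0 * real_of_int (max \<bar>n1\<bar> (max \<bar>n2\<bar> \<bar>n3\<bar>)) ^ 4 \<le> \<bar>real_of_int (Phi3 n1 n2 n3)\<bar>"
    using assms(5) by (auto simp: B2_index_def)
  have Phi3_real: "real_of_int (Phi3 n1 n2 n3) = (real_of_int n1 + real_of_int n2 + real_of_int n3) ^ 5
      - real_of_int n1 ^ 5 - real_of_int n2 ^ 5 - real_of_int n3 ^ 5"
    by (simp add: Phi3_def)
  have max_real: "real_of_int (max \<bar>n1\<bar> (max \<bar>n2\<bar> \<bar>n3\<bar>))
      = max \<bar>real_of_int n1\<bar> (max \<bar>real_of_int n2\<bar> \<bar>real_of_int n3\<bar>)"
    by (simp add: of_int_max)
  have "real_of_int n1 + real_of_int n2 + real_of_int n3 = real_of_int n"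
    using sum by simp
  moreover have "jbracket (s + \<epsilon>) (real_of_int n1 + real_of_int n2 + real_of_int n3) * \<bar>B2_symbol n1 n2 n3\<bar>
      \<le> 3 powr (s + 1) * (2 / c0) * (jbracket s n1 + jbracket s n2 + jbracket s n3)"
    using resonance unfolding Phi3_real max_real
    by (intro B2_symbol_weighted_le assms(1-4)) (use n1 n23 in linarith)+
  ultimately have "jbracket (s + \<epsilon>) n * \<bar>B2_symbol n1 n2 n3\<bar>
      \<le> 3 powr (s + 1) * (2 / c0) * (jbracket s n1 + jbracket s n2 + jbracket s n3)"
    by simp
  then have "jbracket (s + \<epsilon>) n * \<bar>B2_symbol n1 n2 n3\<bar> * (cmod (a n1) * cmod (a n2) * cmod (a n3))
      \<le> 3 powr (s + 1) * (2 / c0) * (jbracket s n1 + jbracket s n2 + jbracket s n3)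
         * (cmod (a n1) * cmod (a n2) * cmod (a n3))"
    by (rule mult_right_mono) simp
  then show ?thesis
    unfolding norm_B2_term[OF sum] by (simp add: algebra_simps add_divide_distrib)
qed

lemma B1_weighted_sums_le:
  fixes s \<epsilon> :: real and a :: "int \<Rightarrow> complex"
  defines "f \<equiv> \<lambda>k. jbracket s k * cmod (a k)" and "g \<equiv> \<lambda>k. cmod (a k)"
  assumes s\<epsilon>: "0 \<le> s" "0 \<le> \<epsilon>" "\<epsilon> \<le> 1"
    and f: "(\<lambda>k. (f k)\<^sup>2) summable_on UNIV" and g: "g summable_on UNIV"
    and F: "finite F" "F \<subseteq> B1_index n"
  shows "(\<Sum>k\<in>F. jbracket (s + \<epsilon>) n * cmod (B1_term a n k)) \<le> 2 * 2 powr (s + 1) * convolution f g n"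
proof -
  have f_nonneg: "0 \<le> f k" and g_nonneg: "0 \<le> g k" for k
    by (simp_all add: f_def g_def jbracket_nonneg)
  have summand: "(\<lambda>k. f k * g (n - k)) summable_on UNIV"
    by (rule young_convolution_l2_l1(1)[OF f_nonneg g_nonneg f g])
  have "(\<Sum>k\<in>F. jbracket (s + \<epsilon>) n * cmod (B1_term a n k))
      \<le> (\<Sum>k\<in>F. 2 powr (s + 1) * (f k * g (n - k) + f (n - k) * g k))"
    using B1_term_weighted_le[OF s\<epsilon>] F(2) by (intro sum_mono) (auto simp: f_def g_def mult_ac)
  also have "\<dots> = 2 powr (s + 1) * ((\<Sum>k\<in>F. f k * g (n - k)) + (\<Sum>k\<in>F. f (n - k) * g (n - (n - k))))"
    by (simp add: sum.distrib sum_distrib_left distrib_left)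
  also have "\<dots> \<le> 2 powr (s + 1) * (convolution f g n + convolution f g n)"
    unfolding convolution_def
    using sum_comp_le_infsum[OF summand _ F(1), of id] sum_comp_le_infsum[OF summand _ F(1), of "\<lambda>k. n - k"]
    by (intro mult_left_mono add_mono) (auto simp: f_nonneg g_nonneg inj_on_def)
  finally show ?thesis
    by simp
qed

lemma B1_weighted_le_convolution:
  fixes s \<epsilon> :: real and a :: "int \<Rightarrow> complex"
  defines "f \<equiv> \<lambda>k. jbracket s k * cmod (a k)" and "g \<equiv> \<lambda>k. cmod (a k)"
  assumes s\<epsilon>: "0 \<le> s" "0 \<le> \<epsilon>" "\<epsilon> \<le> 1"
    and f: "(\<lambda>k. (f k)\<^sup>2) summable_on UNIV" and g: "g summable_on UNIV"
  shows "B1_term a n summable_on B1_index n"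
    and "jbracket (s + \<epsilon>) n * cmod (B1 a n) \<le> 2 * 2 powr (s + 1) * convolution f g n"
proof -
  note bound = norm_infsum_le_if_finite_sums_le[where A="B1_index n",
      OF jbracket_pos B1_weighted_sums_le[OF s\<epsilon> f[unfolded f_def] g[unfolded g_def]], folded f_def g_def]
  show "B1_term a n summable_on B1_index n"
    by (rule bound(1))
  have "0 \<le> 2 * 2 powr (s + 1) * convolution f g n"
    by (intro mult_nonneg_nonneg convolution_nonneg) (auto simp: f_def g_def jbracket_nonneg)
  then show "jbracket (s + \<epsilon>) n * cmod (B1 a n) \<le> 2 * 2 powr (s + 1) * convolution f g n"
    using bound(2) by (auto simp: B1_def)
qed

lemma B2_weighted_sums_le:
  fixes s \<epsilon> c0 :: real and a :: "int \<Rightarrow> complex"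
  defines "f \<equiv> \<lambda>k. jbracket s k * cmod (a k)" and "g \<equiv> \<lambda>k. cmod (a k)"
  assumes s\<epsilon>: "0 \<le> s" "0 \<le> \<epsilon>" "\<epsilon> \<le> 1" and c0: "0 < c0"
    and f: "(\<lambda>k. (f k)\<^sup>2) summable_on UNIV" and g: "g summable_on UNIV"
    and F: "finite F" "F \<subseteq> B2_index c0 n"
  shows "(\<Sum>m\<in>F. jbracket (s + \<epsilon>) n * cmod (B2_term a n m))
    \<le> 3 * (3 powr (s + 1) * (2 / c0)) * convolution f (convolution g g) n"
proof -
  define C where "C = 3 powr (s + 1) * (2 / c0)"
  define T where "T = (\<lambda>(x, y, z). f x * g y * g z)"
  define swap rot :: "int \<times> int \<times> int \<Rightarrow> int \<times> int \<times> int"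
    where "swap = (\<lambda>(x, y, z). (y, x, z))" and "rot = (\<lambda>(x, y, z). (z, x, y))"
  have "inj swap" "inj rot"
    by (auto simp: swap_def rot_def inj_def)
  have plane: "F \<subseteq> {(x, y, z). x + y + z = n}"
    using F(2) by (auto simp: B2_index_def)
  have "swap ` F \<subseteq> {(x, y, z). x + y + z = n}" "rot ` F \<subseteq> {(x, y, z). x + y + z = n}"
    using plane by (fastforce simp: swap_def rot_def)+
  then have triples_le: "sum T G \<le> convolution f (convolution g g) n" if "G \<in> {F, swap ` F, rot ` F}" for G
    unfolding T_def using that F(1) plane
    by (intro sum_triples_le_convolution f g) (auto simp: f_def g_def jbracket_nonneg)
  have "(\<Sum>m\<in>F. jbracket (s + \<epsilon>) n * cmod (B2_term a n m)) \<le> (\<Sum>m\<in>F. C * (T m + T (swap m) + T (rot m)))"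
  proof (intro sum_mono)
    fix m assume "m \<in> F"
    obtain x y z where m: "m = (x, y, z)"
      by (cases m)
    with \<open>m \<in> F\<close> F(2) have "(x, y, z) \<in> B2_index c0 n"
      by auto
    with m show "jbracket (s + \<epsilon>) n * cmod (B2_term a n m) \<le> C * (T m + T (swap m) + T (rot m))"
      using B2_term_weighted_le[OF s\<epsilon> c0, of x y z n a]
      by (simp add: C_def T_def swap_def rot_def f_def g_def mult_ac)
  qed
  also have "\<dots> = C * (sum T F + sum T (swap ` F) + sum T (rot ` F))"
    using \<open>inj swap\<close> \<open>inj rot\<close>
    by (simp add: sum.reindex inj_on_subset[of _ UNIV] sum_distrib_left sum.distrib distrib_left)
  also have "\<dots> \<le> C * (3 * convolution f (convolution g g) n)"
    using triples_le[of F] triples_le[of "swap ` F"] triples_le[of "rot ` F"] c0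
    by (intro mult_left_mono) (auto simp: C_def)
  finally show ?thesis
    by (simp add: C_def mult_ac)
qed

lemma B2_weighted_le_convolution:
  fixes s \<epsilon> c0 :: real and a :: "int \<Rightarrow> complex"
  defines "f \<equiv> \<lambda>k. jbracket s k * cmod (a k)" and "g \<equiv> \<lambda>k. cmod (a k)"
  assumes s\<epsilon>: "0 \<le> s" "0 \<le> \<epsilon>" "\<epsilon> \<le> 1" and c0: "0 < c0"
    and f: "(\<lambda>k. (f k)\<^sup>2) summable_on UNIV" and g: "g summable_on UNIV"
  shows "B2_term a n summable_on B2_index c0 n"
    and "jbracket (s + \<epsilon>) n * cmod (B2 c0 a n)
      \<le> 3 * (3 powr (s + 1) * (2 / c0)) * convolution f (convolution g g) n"
proof -
  note bound = norm_infsum_le_if_finite_sums_le[where A="B2_index c0 n",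
      OF jbracket_pos B2_weighted_sums_le[OF s\<epsilon> c0 f[unfolded f_def] g[unfolded g_def]], folded f_def g_def]
  show "B2_term a n summable_on B2_index c0 n"
    by (rule bound(1))
  have "0 \<le> 3 * (3 powr (s + 1) * (2 / c0)) * convolution f (convolution g g) n"
    using c0 by (intro mult_nonneg_nonneg convolution_nonneg) (auto simp: f_def g_def jbracket_nonneg)
  then show "jbracket (s + \<epsilon>) n * cmod (B2 c0 a n)
      \<le> 3 * (3 powr (s + 1) * (2 / c0)) * convolution f (convolution g g) n"
    using bound(2) by (auto simp: B2_def)
qed

lemma Hs_convolution_bounds:
  fixes s :: real and a :: "int \<Rightarrow> complex"
  defines "f \<equiv> \<lambda>k. jbracket s k * cmod (a k)" and "g \<equiv> \<lambda>k. cmod (a k)"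
    and "K \<equiv> Hs_l1_const s" and "A \<equiv> Hs_norm s a"
  assumes s: "1/2 < s" and a: "in_Hs s a"
  shows "(\<lambda>n. (convolution f g n)\<^sup>2) summable_on UNIV"
    and "sqrt (\<Sum>\<^sub>\<infinity>n. (convolution f g n)\<^sup>2) \<le> K * A\<^sup>2"
    and "(\<lambda>n. (convolution f (convolution g g) n)\<^sup>2) summable_on UNIV"
    and "sqrt (\<Sum>\<^sub>\<infinity>n. (convolution f (convolution g g) n)\<^sup>2) \<le> K\<^sup>2 * A ^ 3"
proof -
  have f_nonneg: "0 \<le> f k" and g_nonneg: "0 \<le> g k" and gg_nonneg: "0 \<le> convolution g g k" for k
    by (simp_all add: f_def g_def jbracket_nonneg convolution_nonneg)
  have A_nonneg: "0 \<le> A" and K_nonneg: "0 \<le> K"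
    by (simp_all add: A_def K_def Hs_norm_nonneg Hs_l1_const_nonneg)
  have f: "(\<lambda>k. (f k)\<^sup>2) summable_on UNIV" and f_norm: "sqrt (\<Sum>\<^sub>\<infinity>k. (f k)\<^sup>2) = A"
    using a by (simp_all add: f_def A_def in_Hs_iff_weighted_l2 Hs_norm_eq)
  have g: "g summable_on UNIV" and g_norm: "infsum g UNIV \<le> K * A"
    using Hs_l1_embedding[OF s a] by (simp_all add: g_def K_def A_def)
  note young_gg = young_convolution_l1[OF g_nonneg g_nonneg g g]
  have gg_norm: "infsum (convolution g g) UNIV \<le> (K * A)\<^sup>2"
    using young_gg(3) g_norm mult_mono[OF g_norm g_norm] K_nonneg A_nonneg
    by (simp add: power2_eq_square infsum_nonneg g_nonneg)
  show "(\<lambda>n. (convolution f g n)\<^sup>2) summable_on UNIV"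
    by (rule young_convolution_l2_l1(2)[OF f_nonneg g_nonneg f g])
  show "(\<lambda>n. (convolution f (convolution g g) n)\<^sup>2) summable_on UNIV"
    by (rule young_convolution_l2_l1(2)[OF f_nonneg gg_nonneg f young_gg(2)])
  have "sqrt (\<Sum>\<^sub>\<infinity>n. (convolution f g n)\<^sup>2) \<le> A * (K * A)"
    using l2_norm_convolution_le[OF f_nonneg g_nonneg f g] mult_left_mono[OF g_norm A_nonneg]
    by (simp add: f_norm)
  then show "sqrt (\<Sum>\<^sub>\<infinity>n. (convolution f g n)\<^sup>2) \<le> K * A\<^sup>2"
    by (simp add: power2_eq_square mult_ac)
  have "sqrt (\<Sum>\<^sub>\<infinity>n. (convolution f (convolution g g) n)\<^sup>2) \<le> A * (K * A)\<^sup>2"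
    using l2_norm_convolution_le[OF f_nonneg gg_nonneg f young_gg(2)] mult_left_mono[OF gg_norm A_nonneg]
    by (simp add: f_norm)
  then show "sqrt (\<Sum>\<^sub>\<infinity>n. (convolution f (convolution g g) n)\<^sup>2) \<le> K\<^sup>2 * A ^ 3"
    by (simp add: power2_eq_square power3_eq_cube mult_ac)
qed

lemma Hs_estimate_B1_B2:
  fixes s \<epsilon> c0 :: real and a :: "int \<Rightarrow> complex"
  defines "K \<equiv> Hs_l1_const s" and "A \<equiv> Hs_norm s a"
  assumes s: "1/2 < s" and \<epsilon>: "0 \<le> \<epsilon>" "\<epsilon> \<le> 1" and c0: "0 < c0" and a: "in_Hs s a"
  shows "\<forall>n. B1_term a n summable_on B1_index n \<and> B2_term a n summable_on B2_index c0 n"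
    and "in_Hs (s + \<epsilon>) (\<lambda>n. B1 a n + B2 c0 a n)"
    and "Hs_norm (s + \<epsilon>) (\<lambda>n. B1 a n + B2 c0 a n)
      \<le> 2 * 2 powr (s + 1) * K * A\<^sup>2 + 3 * (3 powr (s + 1) * (2 / c0)) * K\<^sup>2 * A ^ 3"
proof -
  define f g where "f = (\<lambda>k. jbracket s k * cmod (a k))" and "g = (\<lambda>k. cmod (a k))"
  define p q where "p = 2 * 2 powr (s + 1)" and "q = 3 * (3 powr (s + 1) * (2 / c0))"
  have s_nonneg: "0 \<le> s" and pq_nonneg: "0 \<le> p" "0 \<le> q"
    using s c0 by (simp_all add: p_def q_def)
  note conv = Hs_convolution_bounds[OF s a, folded f_def g_def K_def A_def]
  have f: "(\<lambda>k. (f k)\<^sup>2) summable_on UNIV" and g: "g summable_on UNIV"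
    using a Hs_l1_embedding[OF s a] by (simp_all add: f_def g_def in_Hs_iff_weighted_l2)
  note B1 = B1_weighted_le_convolution[OF s_nonneg \<epsilon> f[unfolded f_def] g[unfolded g_def], folded f_def g_def]
  note B2 = B2_weighted_le_convolution[OF s_nonneg \<epsilon> c0 f[unfolded f_def] g[unfolded g_def], folded f_def g_def]
  show "\<forall>n. B1_term a n summable_on B1_index n \<and> B2_term a n summable_on B2_index c0 n"
    using B1(1) B2(1) by blast
  define u v where "u n = p * convolution f g n" and "v n = q * convolution f (convolution g g) n" for n
  have dominated: "jbracket (s + \<epsilon>) n * cmod (B1 a n + B2 c0 a n) \<le> u n + v n" for n
  proof -
    have "jbracket (s + \<epsilon>) n * cmod (B1 a n + B2 c0 a n)
        \<le> jbracket (s + \<epsilon>) n * cmod (B1 a n) + jbracket (s + \<epsilon>) n * cmod (B2 c0 a n)"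
      by (simp add: jbracket_nonneg mult_left_mono norm_triangle_ineq flip: distrib_left)
    also have "\<dots> \<le> u n + v n"
      using B1(2) B2(2) by (intro add_mono) (simp_all add: u_def v_def p_def q_def)
    finally show ?thesis .
  qed
  have u: "(\<lambda>n. (u n)\<^sup>2) summable_on UNIV" and v: "(\<lambda>n. (v n)\<^sup>2) summable_on UNIV"
    using conv(1,3) by (simp_all add: u_def v_def power_mult_distrib summable_on_cmult_right)
  note minkowski = minkowski_infsum[OF u v]
  show "in_Hs (s + \<epsilon>) (\<lambda>n. B1 a n + B2 c0 a n)"
    by (rule Hs_norm_le_if_dominated(1)[OF dominated minkowski(1)])
  have "Hs_norm (s + \<epsilon>) (\<lambda>n. B1 a n + B2 c0 a n) \<le> sqrt (\<Sum>\<^sub>\<infinity>n. (u n + v n)\<^sup>2)"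
    by (rule Hs_norm_le_if_dominated(2)[OF dominated minkowski(1)])
  also have "\<dots> \<le> p * sqrt (\<Sum>\<^sub>\<infinity>n. (convolution f g n)\<^sup>2) + q * sqrt (\<Sum>\<^sub>\<infinity>n. (convolution f (convolution g g) n)\<^sup>2)"
    using minkowski(2) pq_nonneg by (simp add: u_def v_def sqrt_infsum_power2_cmult)
  also have "\<dots> \<le> p * (K * A\<^sup>2) + q * (K\<^sup>2 * A ^ 3)"
    using conv(2,4) pq_nonneg by (intro add_mono mult_left_mono)
  finally show "Hs_norm (s + \<epsilon>) (\<lambda>n. B1 a n + B2 c0 a n)
      \<le> 2 * 2 powr (s + 1) * K * A\<^sup>2 + 3 * (3 powr (s + 1) * (2 / c0)) * K\<^sup>2 * A ^ 3"
    by (simp add: p_def q_def mult_ac)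
qed

lemma B1_B2_Hs_bound:
  assumes "1/2 < s" "0 \<le> \<epsilon>" "\<epsilon> \<le> 1" "0 < c0"
  obtains C where "0 < C"
    and "\<And>a M. in_Hs s a \<Longrightarrow> Hs_norm s a \<le> M \<Longrightarrow>
      (\<forall>n. B1_term a n summable_on B1_index n \<and> B2_term a n summable_on B2_index c0 n) \<and>
      in_Hs (s + \<epsilon>) (\<lambda>n. B1 a n + B2 c0 a n) \<and>
      Hs_norm (s + \<epsilon>) (\<lambda>n. B1 a n + B2 c0 a n) \<le> C * (M\<^sup>2 + M ^ 3)"
proof -
  define K where "K = Hs_l1_const s"
  define \<alpha> \<beta> where "\<alpha> = 2 * 2 powr (s + 1) * K" and "\<beta> = 3 * (3 powr (s + 1) * (2 / c0)) * K\<^sup>2"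
  have \<alpha>\<beta>_nonneg: "0 \<le> \<alpha>" "0 \<le> \<beta>"
    using assms(4) by (simp_all add: \<alpha>_def \<beta>_def K_def Hs_l1_const_nonneg)
  show ?thesis
  proof
    show "0 < \<alpha> + \<beta> + 1"
      using \<alpha>\<beta>_nonneg by linarith
    fix a M assume a: "in_Hs s a" and A_le: "Hs_norm s a \<le> M"
    define A where "A = Hs_norm s a"
    have A_bounds: "0 \<le> A" "A \<le> M"
      using A_le by (simp_all add: A_def Hs_norm_nonneg)
    note estimate = Hs_estimate_B1_B2[OF assms a, folded K_def A_def, folded \<alpha>_def \<beta>_def]
    have "\<alpha> * A\<^sup>2 + \<beta> * A ^ 3 \<le> \<alpha> * M\<^sup>2 + \<beta> * M ^ 3"
      using A_bounds \<alpha>\<beta>_nonneg by (intro add_mono mult_left_mono power_mono) auto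
    also have "\<dots> \<le> (\<alpha> + \<beta> + 1) * (M\<^sup>2 + M ^ 3)"
      using A_bounds \<alpha>\<beta>_nonneg by (simp add: algebra_simps)
    finally show "(\<forall>n. B1_term a n summable_on B1_index n \<and> B2_term a n summable_on B2_index c0 n) \<and>
      in_Hs (s + \<epsilon>) (\<lambda>n. B1 a n + B2 c0 a n) \<and>
      Hs_norm (s + \<epsilon>) (\<lambda>n. B1 a n + B2 c0 a n) \<le> (\<alpha> + \<beta> + 1) * (M\<^sup>2 + M ^ 3)"
      by (intro conjI estimate(1,2) order_trans[OF estimate(3)])
  qed
qed

theorem lemma5p2:
  fixes s \<epsilon> c0 :: real
  assumes "s > 1/2" and "0 \<le> \<epsilon>" and "\<epsilon> < 1" and "c0 > 0"
  shows "\<exists>C>0. \<forall>(I :: real set) (u :: real \<Rightarrow> int \<Rightarrow> complex).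
     I \<noteq> {} \<longrightarrow>
     (\<forall>t\<in>I. real_mean_zero (u t) \<and> in_Hs s (u t)) \<longrightarrow>
     bdd_above ((\<lambda>t. Hs_norm s (u t)) ` I) \<longrightarrow>
     (let M = (SUP t\<in>I. Hs_norm s (u t)) in
       \<forall>t\<in>I.
         (\<forall>n. n \<noteq> 0 \<longrightarrow> B1_term (u t) n summable_on B1_index n
                        \<and> B2_term (u t) n summable_on B2_index c0 n) \<and>
         in_Hs (s + \<epsilon>) (\<lambda>n. B1 (u t) n + B2 c0 (u t) n) \<and>
         Hs_norm (s + \<epsilon>) (\<lambda>n. B1 (u t) n + B2 c0 (u t) n) \<le> C * (M^2 + M^3))"
proof -
  obtain C where "0 < C" and bound: "\<And>a M. in_Hs s a \<Longrightarrow> Hs_norm s a \<le> M \<Longrightarrow>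
      (\<forall>n. B1_term a n summable_on B1_index n \<and> B2_term a n summable_on B2_index c0 n) \<and>
      in_Hs (s + \<epsilon>) (\<lambda>n. B1 a n + B2 c0 a n) \<and>
      Hs_norm (s + \<epsilon>) (\<lambda>n. B1 a n + B2 c0 a n) \<le> C * (M\<^sup>2 + M ^ 3)"
    using B1_B2_Hs_bound[OF assms(1,2) less_imp_le[OF assms(3)] assms(4)] by blast
  show ?thesis
  proof (intro exI[of _ C] conjI allI impI)
    fix I :: "real set" and u :: "real \<Rightarrow> int \<Rightarrow> complex"
    assume u: "\<forall>t\<in>I. real_mean_zero (u t) \<and> in_Hs s (u t)"
      and bdd: "bdd_above ((\<lambda>t. Hs_norm s (u t)) ` I)"
    have "in_Hs s (u t)" if "t \<in> I" for t
      using u that by blast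
    note estimate = bound[OF this cSUP_upper[OF _ bdd]]
    show "let M = (SUP t\<in>I. Hs_norm s (u t)) in \<forall>t\<in>I.
         (\<forall>n. n \<noteq> 0 \<longrightarrow> B1_term (u t) n summable_on B1_index n
                        \<and> B2_term (u t) n summable_on B2_index c0 n) \<and>
         in_Hs (s + \<epsilon>) (\<lambda>n. B1 (u t) n + B2 c0 (u t) n) \<and>
         Hs_norm (s + \<epsilon>) (\<lambda>n. B1 (u t) n + B2 c0 (u t) n) \<le> C * (M^2 + M^3)"
      unfolding Let_def using estimate by blast
  qed (rule \<open>0 < C\<close>)
qed

end
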